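(* Let $Q=Q^+(5,q)$ be the non-degenerate hyperbolic quadric in $\mathrm{PG}(5,q)$ with associated polarity $\perp$, and let $\ell$ be a line of $\mathrm{PG}(5,q)$ disjoint from $Q$. Let $S$ be a line spread of the solid $\ell^\perp$. For every line $m\in S$, let $\mathcal{F}_m$ be the set of lines of $Q$ contained in the solid $\langle m,\ell\rangle$, and let $\mathcal{F}=\bigcup_{m\in S}\mathcal{F}_m$. Then $\mathcal{F}$ is a $(3,2)$-ovoid of $Q$, i.e. every plane contained in $Q$ contains precisely one line of $\mathcal{F}$.
   Context: Projective terminology is used: points, lines, planes and solids of $\mathrm{PG}(5,q)$ are subspaces of projective dimension $0,1,2,3$ (vector dimensions $1,2,3,4$). A line spread of a solid is a set of lines of the solid partitioning its points. The polarity $\perp$ is the one induced by the bilinear form associated to the quadratic form defining $Q$. The generators of $Q^+(5,q)$ are the planes contained in $Q$; a $(3,2)$-ovoid is a set of lines of $Q$ such that each such plane contains exactly one of them. *)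

theory Defs
  imports "HOL-Analysis.Analysis"
begin

text \<open>The ambient space PG(5,q) is the projective space of the vector space F^6,
  F a finite field with q elements. Projective subspaces are identified with
  vector subspaces of F^6; projective dimension k = vector dimension k+1.\<close>

type_synonym 'a vec6 = "'a ^ 6"

definition psub :: "nat \<Rightarrow> ('a::field) vec6 set \<Rightarrow> bool" where
  "psub k U \<longleftrightarrow> vec.subspace U \<and> vec.dim U = k + 1"

abbreviation pline :: "('a::field) vec6 set \<Rightarrow> bool" where "pline U \<equiv> psub 1 U"
abbreviation pplane :: "('a::field) vec6 set \<Rightarrow> bool" where "pplane U \<equiv> psub 2 U"
abbreviation psolid :: "('a::field) vec6 set \<Rightarrow> bool" where "psolid U \<equiv> psub 3 U"

definition hq :: "('a::field) vec6 \<Rightarrow> 'a" where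
  "hq x = x$0 * x$1 + x$2 * x$3 + x$4 * x$5"

definition hb :: "('a::field) vec6 \<Rightarrow> 'a vec6 \<Rightarrow> 'a" where
  "hb x y = hq (x + y) - hq x - hq y"

definition perp :: "('a::field) vec6 set \<Rightarrow> 'a vec6 set" where
  "perp U = {y. \<forall>x\<in>U. hb x y = 0}"

definition on_quadric :: "('a::field) vec6 set \<Rightarrow> bool" where
  "on_quadric U \<longleftrightarrow> (\<forall>x\<in>U. hq x = 0)"

definition disjoint_quadric :: "('a::field) vec6 set \<Rightarrow> bool" where
  "disjoint_quadric U \<longleftrightarrow> (\<forall>x\<in>U. x \<noteq> 0 \<longrightarrow> hq x \<noteq> 0)"

definition quadric_lines :: "('a::field) vec6 set set" where
  "quadric_lines = {L. pline L \<and> on_quadric L}"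

definition generators :: "('a::field) vec6 set set" where
  "generators = {P. pplane P \<and> on_quadric P}"

definition line_spread :: "('a::field) vec6 set set \<Rightarrow> 'a vec6 set \<Rightarrow> bool" where
  "line_spread S T \<longleftrightarrow> (\<forall>m\<in>S. pline m \<and> m \<subseteq> T) \<and>
     (\<forall>x\<in>T. x \<noteq> 0 \<longrightarrow> (\<exists>!m. m \<in> S \<and> x \<in> m))"

definition ovoid32 :: "('a::field) vec6 set set \<Rightarrow> bool" where
  "ovoid32 F \<longleftrightarrow> F \<subseteq> quadric_lines \<and>
     (\<forall>P\<in>generators. \<exists>!L. L \<in> F \<and> L \<subseteq> P)"

end

theory Submission
  imports Defs
begin

text \<open>
  Since l is anisotropic, it meets its polar W = perp l trivially, so W is a solid complementary
  to l. A generator P also meets l trivially, so \<langle>P, l\<rangle> is a hyperplane and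
  H = \<langle>P, l\<rangle> \<inter> W is a plane of W. A line of P inside the solid \<langle>m, l\<rangle> of a spread
  line m spans that solid together with l, which forces m \<subseteq> H and makes the line equal to
  P \<inter> \<langle>m, l\<rangle>; conversely, m \<subseteq> H makes P \<inter> \<langle>m, l\<rangle> a line. Counting points shows that
  the plane H contains exactly one line of the spread, so P contains exactly one line of F.
\<close>

lemma card_subspace:
  fixes U :: "('a::{field,finite} ^ 'n) set"
  assumes "vec.subspace U"
  shows "card U = CARD('a) ^ vec.dim U"
proof -
  obtain B where B: "B \<subseteq> U" "vec.independent B" "U \<subseteq> vec.span B" "card B = vec.dim U"
    using vec.basis_exists by blast
  have "finite B" and indep: "\<And>c. (\<Sum>v\<in>B. c v *s v) = 0 \<Longrightarrow> \<forall>v\<in>B. c v = 0"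
    using B(2) unfolding vec.independent_explicit by blast+
  have U: "U = vec.span B"
    using B(1,3) assms vec.span_minimal by blast
  define comb where "comb u = (\<Sum>v\<in>B. u v *s v)" for u
  have "bij_betw comb (B \<rightarrow>\<^sub>E UNIV) U"
  proof (rule bij_betw_imageI)
    show "inj_on comb (B \<rightarrow>\<^sub>E UNIV)"
    proof (rule inj_onI)
      fix u w assume u: "u \<in> B \<rightarrow>\<^sub>E UNIV" and w: "w \<in> B \<rightarrow>\<^sub>E UNIV" and "comb u = comb w"
      then have "(\<Sum>v\<in>B. (u v - w v) *s v) = 0"
        by (simp add: comb_def vec.scale_left_diff_distrib sum_subtractf)
      then have "\<forall>v\<in>B. u v - w v = 0"
        by (rule indep)
      then show "u = w"
        using u w by (auto intro: PiE_ext)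
    qed
    have "comb (restrict u B) = comb u" for u
      unfolding comb_def by (rule sum.cong) simp_all
    moreover have "U = range comb"
      unfolding U vec.span_finite[OF \<open>finite B\<close>] comb_def by blast
    ultimately show "comb ` (B \<rightarrow>\<^sub>E UNIV) = U"
      by (metis (no_types, lifting) UNIV_I image_eqI image_mono restrict_PiE_iff
          subset_UNIV subset_antisym subsetI rangeE)
  qed
  then have "card U = card (B \<rightarrow>\<^sub>E (UNIV :: 'a set))"
    by (simp add: bij_betw_same_card)
  also have "\<dots> = CARD('a) ^ vec.dim U"
    by (simp add: card_PiE \<open>finite B\<close> B(4))
  finally show ?thesis .
qed

lemma dim_UNIV_vec6: "vec.dim (UNIV :: ('a::field) vec6 set) = 6"
  by (subst vec_dim_card) simp

lemma dim_vec6_le: "vec.dim (X :: ('a::field) vec6 set) \<le> 6"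
  using dim_subset_UNIV_cart_gen[of X] by simp

lemma dim_span_Un_Int:
  fixes A B :: "('a::field ^ 'n) set"
  assumes "vec.subspace A" "vec.subspace B"
  shows "vec.dim (vec.span (A \<union> B)) + vec.dim (A \<inter> B) = vec.dim A + vec.dim B"
  using vec.dim_sums_Int[OF assms] by (simp add: vec.span_Un assms[folded vec.span_eq_iff])

lemma dim_span_Un_direct:
  fixes A B :: "('a::field ^ 'n) set"
  assumes "vec.subspace A" "vec.subspace B" "A \<inter> B = {0}"
  shows "vec.dim (vec.span (A \<union> B)) = vec.dim A + vec.dim B"
  using dim_span_Un_Int[OF assms(1,2)] assms(3) by simp

lemma dim_add_le_of_inter_zero:
  fixes X Y T :: "('a::field ^ 'n) set"
  assumes "vec.subspace X" "vec.subspace Y" "vec.subspace T" "X \<subseteq> T" "Y \<subseteq> T" "X \<inter> Y = {0}"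
  shows "vec.dim X + vec.dim Y \<le> vec.dim T"
  using dim_span_Un_direct[of X Y] vec.dim_subset[OF vec.span_minimal[of "X \<union> Y" T]] assms by simp

lemma span_Un_eq_of_dim_add:
  fixes X Y T :: "('a::field ^ 'n) set"
  assumes "vec.subspace X" "vec.subspace Y" "vec.subspace T" "X \<subseteq> T" "Y \<subseteq> T" "X \<inter> Y = {0}"
    and "vec.dim X + vec.dim Y = vec.dim T"
  shows "vec.span (X \<union> Y) = T"
  using assms dim_span_Un_direct[of X Y]
  by (intro vec.subspace_dim_equal vec.span_minimal) simp_all

lemma hb_expand: "hb x y = x$0*y$1 + x$1*y$0 + x$2*y$3 + x$3*y$2 + x$4*y$5 + x$5*y$4"
  unfolding hb_def hq_def by (simp add: algebra_simps)

lemma hb_commute: "hb x y = hb y x"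
  unfolding hb_expand by (simp add: algebra_simps)

lemma hb_add_right: "hb x (y + z) = hb x y + hb x z"
  and hb_diff_right: "hb x (y - z) = hb x y - hb x z"
  and hb_scale_left: "hb (c *s x) y = c * hb x y"
  and hb_scale_right: "hb x (c *s y) = c * hb x y"
  and hb_self: "hb x x = 2 * hq x"
  unfolding hb_expand hq_def by (simp_all add: algebra_simps)

lemma hq_add: "hq (x + y) = hq x + hq y + hb x y"
  unfolding hb_def by simp

lemma hq_scale: "hq (c *s x) = c^2 * hq x"
  unfolding hq_def by (simp add: algebra_simps power2_eq_square)

lemma subspace_perp: "vec.subspace (perp U)"
  unfolding vec.subspace_def perp_def
  by (simp add: hb_add_right hb_scale_right) (simp add: hb_expand)

lemma perp_span: "perp (vec.span U) = perp U"
proof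
  show "perp (vec.span U) \<subseteq> perp U"
    using vec.span_superset unfolding perp_def by blast
  show "perp U \<subseteq> perp (vec.span U)"
  proof
    fix y assume "y \<in> perp U"
    then have "U \<subseteq> perp {y}"
      unfolding perp_def by (auto simp: hb_commute)
    then have "vec.span U \<subseteq> perp {y}"
      by (rule vec.span_minimal[OF _ subspace_perp])
    then show "y \<in> perp (vec.span U)"
      unfolding perp_def by (auto simp: hb_commute)
  qed
qed

lemma dim_perp_singleton: "5 \<le> vec.dim (perp {u})"
proof (cases "perp {u} = UNIV")
  case True
  then have "vec.dim (perp {u}) = 6"
    by (simp only: dim_UNIV_vec6)
  then show ?thesis by simp
next
  case False
  then obtain v where v: "hb u v \<noteq> 0"
    unfolding perp_def by auto
  have "x \<in> vec.span (insert v (perp {u}))" for x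
  proof -
    define c where "c = hb u x / hb u v"
    have "x - c *s v \<in> perp {u}"
      using v by (simp add: perp_def hb_diff_right hb_scale_right c_def)
    then have "x - c *s v \<in> vec.span (insert v (perp {u}))"
      by (simp add: vec.span_base)
    moreover have "c *s v \<in> vec.span (insert v (perp {u}))"
      by (simp add: vec.span_base vec.span_scale)
    ultimately show ?thesis
      using vec.span_add by fastforce
  qed
  then have "6 \<le> vec.dim (insert v (perp {u}))"
    using vec.dim_mono[of UNIV] dim_UNIV_vec6 by (metis subsetI)
  also have "\<dots> \<le> vec.dim (perp {u}) + 1"
    by (simp add: vec.dim_insert)
  finally show ?thesis by simp
qed

lemma dim_perp_finite:
  fixes B :: "('a::field) vec6 set"
  assumes "finite B"
  shows "6 \<le> vec.dim (perp B) + card B"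
  using assms
proof (induction B rule: finite_induct)
  case empty
  have "perp {} = (UNIV :: 'a vec6 set)"
    unfolding perp_def by simp
  then show ?case
    by (simp only: dim_UNIV_vec6)
next
  case (insert u B)
  have "perp (insert u B) = perp {u} \<inter> perp B"
    unfolding perp_def by blast
  moreover have "vec.dim (vec.span (perp {u} \<union> perp B)) + vec.dim (perp {u} \<inter> perp B)
      = vec.dim (perp {u}) + vec.dim (perp B)"
    by (intro dim_span_Un_Int subspace_perp)
  ultimately show ?case
    using insert dim_perp_singleton[of u] dim_vec6_le[of "vec.span (perp {u} \<union> perp B)"] by simp
qed

lemma dim_perp: "6 \<le> vec.dim (perp U) + vec.dim U"
proof -
  obtain B where B: "B \<subseteq> U" "vec.independent B" "U \<subseteq> vec.span B" "card B = vec.dim U"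
    using vec.basis_exists by blast
  have "perp U = perp B"
    using B(1,3) perp_span[of B] unfolding perp_def by blast
  then show ?thesis
    using dim_perp_finite[of B] B(2,4) vec.independent_bound_general by auto
qed

lemma square_root_char_2:
  fixes a :: "'a::{field,finite}"
  assumes "(2::'a) = 0"
  shows "\<exists>c. c^2 = a"
proof -
  have "inj (\<lambda>x::'a. x^2)"
  proof (rule injI)
    fix x y :: 'a
    assume "x^2 = y^2"
    have "(x - y)^2 = x^2 - y^2 - 2 * (x * y - y^2)"
      by (simp add: algebra_simps power2_eq_square)
    also have "\<dots> = 0"
      using \<open>x^2 = y^2\<close> assms by simp
    finally show "x = y" by simp
  qed
  then have "surj (\<lambda>x::'a. x^2)"
    by (rule finite_UNIV_inj_surj[rotated]) simp
  then show ?thesis by (metis surjD)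
qed

text \<open>
  A nonzero a \<in> U \<inter> perp U has hb a a = 2 * hq a = 0, which forces characteristic 2. Then
  hq (c *s a + x) = c^2 * hq a + hq x for x \<in> U, and this vanishes when c is a square root of
  hq x / hq a. The hypothesis on dim U supplies x outside the span of a; it cannot be dropped,
  since in characteristic 2 every point lies in its own polar hyperplane.
\<close>
lemma anisotropic_inter_perp:
  fixes U :: "('a::{field,finite}) vec6 set"
  assumes U: "vec.subspace U" "2 \<le> vec.dim U" and "disjoint_quadric U"
  shows "U \<inter> perp U = {0}"
proof -
  have False if a: "a \<in> U" "a \<in> perp U" "a \<noteq> 0" for a
  proof -
    have qa: "hq a \<noteq> 0"
      using \<open>disjoint_quadric U\<close> a unfolding disjoint_quadric_def by blast
    have "2 * hq a = 0"
      using a unfolding perp_def by (auto simp: hb_self[symmetric])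
    with qa have char_2: "(2::'a) = 0" by simp
    have "\<not> U \<subseteq> vec.span {a}"
      using vec.dim_mono[of U "{a}"] U a by auto
    then obtain x where x: "x \<in> U" "x \<notin> vec.span {a}" by blast
    obtain c where c: "c^2 = hq x / hq a"
      using square_root_char_2[OF char_2] by blast
    have "hb a x = 0"
      using a x unfolding perp_def by (auto simp: hb_commute)
    then have "hq (c *s a + x) = 2 * hq x"
      using qa by (simp add: hq_add hq_scale hb_scale_left c)
    also have "\<dots> = 0"
      using char_2 by simp
    finally have "hq (c *s a + x) = 0" .
    moreover have "c *s a + x \<in> U"
      using U(1) a(1) x(1) by (simp add: vec.subspace_add vec.subspace_scale)
    moreover have "c *s a + x \<noteq> 0"
    proof
      assume "c *s a + x = 0"
      then have "x = (- c) *s a" by (simp add: eq_neg_iff_add_eq_0 add.commute)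
      then show False
        using x(2) by (simp add: vec.span_base vec.span_scale vec.span_neg)
    qed
    ultimately show False
      using \<open>disjoint_quadric U\<close> unfolding disjoint_quadric_def by blast
  qed
  moreover have "0 \<in> U \<inter> perp U"
    using U(1) subspace_perp vec.subspace_0 by blast
  ultimately show ?thesis by blast
qed

lemma anisotropic_line_perp:
  fixes l :: "('a::{field,finite}) vec6 set"
  assumes "pline l" "disjoint_quadric l"
  shows "l \<inter> perp l = {0}" and "psolid (perp l)"
proof -
  have l: "vec.subspace l" "vec.dim l = 2"
    using \<open>pline l\<close> by (auto simp: psub_def)
  show inter: "l \<inter> perp l = {0}"
    using l \<open>disjoint_quadric l\<close> by (intro anisotropic_inter_perp) simp_all
  have "vec.dim (vec.span (l \<union> perp l)) = 2 + vec.dim (perp l)"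
    using dim_span_Un_direct[OF l(1) subspace_perp inter] l(2) by simp
  then show "psolid (perp l)"
    using dim_perp[of l] dim_vec6_le[of "vec.span (l \<union> perp l)"] l(2) subspace_perp
    unfolding psub_def by simp
qed

lemma on_quadric_inter_disjoint_quadric:
  assumes "vec.subspace A" "vec.subspace B" "on_quadric A" "disjoint_quadric B"
  shows "A \<inter> B = {0}"
proof -
  have "x = 0" if "x \<in> A \<inter> B" for x
    using assms(3,4) that unfolding on_quadric_def disjoint_quadric_def by blast
  moreover have "0 \<in> A \<inter> B"
    using assms(1,2) vec.subspace_0 by blast
  ultimately show ?thesis by blast
qed

lemma card_subspace_nonzero:
  fixes X :: "('a::{field,finite} ^ 'n) set"
  assumes "vec.subspace X"
  shows "card (X - {0}) = CARD('a) ^ vec.dim X - 1"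
  using card_subspace[OF assms] vec.subspace_0[OF assms] by (simp add: card_Diff_singleton)

lemma card_nonzero_line_spread:
  fixes S :: "('a::{field,finite}) vec6 set set"
  assumes "line_spread S T" "H \<subseteq> T"
  shows "card (H - {0}) = (\<Sum>m\<in>S. card (m \<inter> H - {0}))"
proof -
  have cover: "H - {0} = (\<Union>m\<in>S. m \<inter> H - {0})"
    using assms unfolding line_spread_def by blast
  have "(m \<inter> H - {0}) \<inter> (m' \<inter> H - {0}) = {}" if "m \<in> S" "m' \<in> S" "m \<noteq> m'" for m m'
    using assms(1) that unfolding line_spread_def by blast
  then have "card (\<Union>m\<in>S. m \<inter> H - {0}) = (\<Sum>m\<in>S. card (m \<inter> H - {0}))"
    by (intro card_UN_disjoint) auto
  then show ?thesis
    by (simp only: cover)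
qed

lemma power_minus_one_factor:
  fixes q :: nat
  shows "q^3 - 1 = (q^2 + q + 1) * (q - 1)" and "q^4 - 1 = (q^2 + 1) * (q^2 - 1)"
  by (cases q; simp add: algebra_simps power2_eq_square power3_eq_cube power4_eq_xxxx)+

lemma one_less_card_field: "1 < CARD('a::{field,finite})"
  using card_mono[of UNIV "{0::'a, 1}"] by simp

lemma card_line_spread:
  fixes W :: "('a::{field,finite}) vec6 set"
  assumes spread: "line_spread S W" and "psolid W"
  shows "card S = CARD('a)^2 + 1"
proof -
  define q where "q = CARD('a)"
  have W: "vec.subspace W" "vec.dim W = 4"
    using \<open>psolid W\<close> by (simp_all add: psub_def)
  have "1 < q"
    using one_less_card_field[where 'a = 'a] by (simp add: q_def)
  then have "1 < q^2"
    by (rule one_less_power) simp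
  have "(q^2 + 1) * (q^2 - 1) = q^4 - 1"
    by (rule power_minus_one_factor(2)[symmetric])
  also have "\<dots> = card (W - {0})"
    using card_subspace_nonzero[OF W(1)] W(2) by (simp add: q_def)
  also have "\<dots> = (\<Sum>m\<in>S. card (m \<inter> W - {0}))"
    by (rule card_nonzero_line_spread[OF spread order_refl])
  also have "\<dots> = (\<Sum>m\<in>S. q^2 - 1)"
  proof (rule sum.cong[OF refl])
    fix m assume "m \<in> S"
    then have "vec.subspace m" "vec.dim m = 2" "m \<subseteq> W"
      using spread by (auto simp: line_spread_def psub_def)
    then show "card (m \<inter> W - {0}) = q^2 - 1"
      using card_subspace_nonzero[of m] by (simp add: Int_absorb2 q_def)
  qed
  also have "\<dots> = card S * (q^2 - 1)"
    by simp
  finally show ?thesis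
    using \<open>1 < q^2\<close> unfolding q_def[symmetric] by (simp only: mult_cancel2) auto
qed

lemma dim_line_inter_plane:
  fixes W m H :: "('a::field) vec6 set"
  assumes "psolid W" "pline m" "pplane H" "m \<subseteq> W" "H \<subseteq> W" "\<not> m \<subseteq> H"
  shows "vec.dim (m \<inter> H) = 1"
proof -
  have W: "vec.subspace W" "vec.dim W = 4" and m: "vec.subspace m" "vec.dim m = 2"
    and H: "vec.subspace H" "vec.dim H = 3"
    using assms(1-3) by (simp_all add: psub_def)
  have "vec.span (m \<union> H) \<subseteq> W"
    using assms(4,5) W(1) by (simp add: vec.span_minimal)
  then have "vec.dim (vec.span (m \<union> H)) \<le> 4"
    using vec.dim_subset W(2) by metis
  moreover have "vec.dim (m \<inter> H) \<noteq> 2"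
  proof
    assume "vec.dim (m \<inter> H) = 2"
    then have "m \<inter> H = m"
      using m H(1) by (intro vec.subspace_dim_equal) (auto intro: vec.subspace_inter)
    then show False
      using \<open>\<not> m \<subseteq> H\<close> by blast
  qed
  ultimately show ?thesis
    using dim_span_Un_Int[OF m(1) H(1)] vec.dim_subset[of "m \<inter> H" m] m(2) H(2) by simp
qed

text \<open>
  A spread of the solid W has q^2 + 1 lines. If none of them lay in the plane H, each would
  meet H in a single point, and these points would partition the q^2 + q + 1 points of H.
\<close>
lemma line_spread_ex_line_in_plane:
  fixes W H :: "('a::{field,finite}) vec6 set"
  assumes spread: "line_spread S W" and "psolid W" "pplane H" "H \<subseteq> W"
  shows "\<exists>m\<in>S. m \<subseteq> H"
proof (rule ccontr)
  assume none: "\<not> (\<exists>m\<in>S. m \<subseteq> H)"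
  define q where "q = CARD('a)"
  have H: "vec.subspace H" "vec.dim H = 3"
    using \<open>pplane H\<close> by (simp_all add: psub_def)
  have "1 < q"
    using one_less_card_field[where 'a = 'a] by (simp add: q_def)
  have "(q^2 + q + 1) * (q - 1) = q^3 - 1"
    by (rule power_minus_one_factor(1)[symmetric])
  also have "\<dots> = card (H - {0})"
    using card_subspace_nonzero[OF H(1)] H(2) by (simp add: q_def)
  also have "\<dots> = (\<Sum>m\<in>S. card (m \<inter> H - {0}))"
    by (rule card_nonzero_line_spread[OF spread \<open>H \<subseteq> W\<close>])
  also have "\<dots> = (\<Sum>m\<in>S. q - 1)"
  proof (rule sum.cong[OF refl])
    fix m assume "m \<in> S"
    then have "pline m" "m \<subseteq> W" "\<not> m \<subseteq> H"
      using spread none by (auto simp: line_spread_def)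
    then have "vec.dim (m \<inter> H) = 1"
      using assms(2-4) by (intro dim_line_inter_plane)
    moreover have "vec.subspace (m \<inter> H)"
      using \<open>pline m\<close> H(1) by (simp add: psub_def vec.subspace_inter)
    ultimately show "card (m \<inter> H - {0}) = q - 1"
      using card_subspace_nonzero[of "m \<inter> H"] by (simp add: q_def)
  qed
  also have "\<dots> = card S * (q - 1)"
    by simp
  finally have "card S = q^2 + q + 1"
    using \<open>1 < q\<close> by (simp only: mult_cancel2) auto
  with card_line_spread[OF spread \<open>psolid W\<close>] \<open>1 < q\<close> show False
    by (simp add: q_def)
qed

lemma line_spread_lines_in_plane_eq:
  fixes W H :: "('a::field) vec6 set"
  assumes spread: "line_spread S W" and "pplane H"
    and "m \<in> S" "m \<subseteq> H" "m' \<in> S" "m' \<subseteq> H"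
  shows "m = m'"
proof -
  have m: "vec.subspace m" "vec.dim m = 2" "vec.subspace m'" "vec.dim m' = 2"
    using spread assms(3,5) by (auto simp: line_spread_def psub_def)
  have H: "vec.subspace H" "vec.dim H = 3"
    using \<open>pplane H\<close> by (simp_all add: psub_def)
  have "vec.span (m \<union> m') \<subseteq> H"
    using assms(4,6) H(1) by (simp add: vec.span_minimal)
  then have "vec.dim (vec.span (m \<union> m')) \<le> 3"
    using vec.dim_subset H(2) by metis
  moreover have "vec.dim (vec.span (m \<union> m')) + vec.dim (m \<inter> m') = 4"
    using dim_span_Un_Int[OF m(1,3)] m(2,4) by simp
  ultimately have "vec.dim (m \<inter> m') \<noteq> 0"
    by linarith
  then obtain x where "x \<in> m" "x \<in> m'" "x \<noteq> 0"
    by auto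
  then show "m = m'"
    using spread assms(3,5) unfolding line_spread_def by blast
qed

lemma line_spread_plane_unique_line:
  fixes W H :: "('a::{field,finite}) vec6 set"
  assumes "line_spread S W" "psolid W" "pplane H" "H \<subseteq> W"
  shows "\<exists>!m. m \<in> S \<and> m \<subseteq> H"
  using line_spread_ex_line_in_plane[OF assms] line_spread_lines_in_plane_eq[OF assms(1,3)] by blast

context
  fixes l W P :: "('a::field) vec6 set"
  assumes l: "pline l" and W: "psolid W" and inter_l_W: "l \<inter> W = {0}"
    and P: "pplane P" and inter_P_l: "P \<inter> l = {0}"
begin

lemma dim_join_plane_line: "vec.dim (vec.span (P \<union> l)) = 5"
  using dim_span_Un_direct[of P l] P l inter_P_l by (simp add: psub_def)

lemma pplane_join_inter: "pplane (vec.span (P \<union> l) \<inter> W)"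
proof -
  let ?H = "vec.span (P \<union> l) \<inter> W"
  have subspaces: "vec.subspace P" "vec.subspace l" "vec.subspace W"
    and dims: "vec.dim P = 3" "vec.dim l = 2" "vec.dim W = 4"
    using P l W by (simp_all add: psub_def)
  have H: "vec.subspace ?H"
    by (simp add: vec.subspace_inter subspaces)
  have "?H \<inter> l = {0}"
    using inter_l_W H subspaces(2) vec.subspace_0 by blast
  then have "vec.dim ?H + vec.dim l \<le> vec.dim (vec.span (P \<union> l))"
    using subspaces H vec.span_superset[of "P \<union> l"]
    by (intro dim_add_le_of_inter_zero) auto
  then have "vec.dim ?H \<le> 3"
    using dims dim_join_plane_line by simp
  have "vec.dim (vec.span (vec.span (P \<union> l) \<union> W)) + vec.dim ?H = 5 + vec.dim W"
    using dim_span_Un_Int[of "vec.span (P \<union> l)" W] subspaces dim_join_plane_line by simp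
  then have "3 \<le> vec.dim ?H"
    using dims dim_vec6_le[of "vec.span (vec.span (P \<union> l) \<union> W)"] by linarith
  with \<open>vec.dim ?H \<le> 3\<close> H show ?thesis
    by (simp add: psub_def)
qed

lemma psolid_join_line:
  assumes "pline m" "m \<subseteq> W"
  shows "psolid (vec.span (m \<union> l))"
proof -
  have subspaces: "vec.subspace m" "vec.subspace l" and dims: "vec.dim m = 2" "vec.dim l = 2"
    using assms(1) l by (simp_all add: psub_def)
  have "m \<inter> l = {0}"
    using assms(2) inter_l_W vec.subspace_0[OF subspaces(1)] vec.subspace_0[OF subspaces(2)] by blast
  then show ?thesis
    using dim_span_Un_direct[OF subspaces] dims by (simp add: psub_def)
qed

lemma dim_plane_inter_solid_le:
  assumes "pline m" "m \<subseteq> W"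
  shows "vec.dim (P \<inter> vec.span (m \<union> l)) \<le> 2"
proof -
  let ?T = "vec.span (m \<union> l)"
  have "P \<inter> ?T \<inter> l = {0}"
    using inter_P_l vec.span_zero[of "m \<union> l"] by blast
  moreover have "vec.subspace (P \<inter> ?T)" "vec.subspace l"
    using P l by (simp_all add: psub_def vec.subspace_inter)
  moreover have "l \<subseteq> ?T"
    using vec.span_superset by blast
  ultimately have "vec.dim (P \<inter> ?T) + vec.dim l \<le> vec.dim ?T"
    by (intro dim_add_le_of_inter_zero) auto
  then show ?thesis
    using psolid_join_line[OF assms] l by (simp add: psub_def)
qed

lemma quadric_line_in_plane_and_solid_iff:
  assumes "on_quadric P" and m: "pline m" "m \<subseteq> W"
  shows "L \<in> quadric_lines \<and> L \<subseteq> P \<and> L \<subseteq> vec.span (m \<union> l) \<longleftrightarrow>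
    m \<subseteq> vec.span (P \<union> l) \<inter> W \<and> L = P \<inter> vec.span (m \<union> l)"
proof -
  let ?T = "vec.span (m \<union> l)"
  have T: "vec.subspace ?T" "vec.dim ?T = 4" "l \<subseteq> ?T" "m \<subseteq> ?T"
    using psolid_join_line[OF m] vec.span_superset[of "m \<union> l"] by (auto simp: psub_def)
  have subspaces: "vec.subspace P" "vec.subspace l"
    and dims: "vec.dim P = 3" "vec.dim l = 2"
    using P l by (simp_all add: psub_def)
  show ?thesis
  proof
    assume L: "L \<in> quadric_lines \<and> L \<subseteq> P \<and> L \<subseteq> ?T"
    then have "vec.subspace L" "vec.dim L = 2"
      by (simp_all add: quadric_lines_def psub_def)
    moreover have "L \<inter> l = {0}"
      using L inter_P_l vec.subspace_0[OF \<open>vec.subspace L\<close>] vec.subspace_0[OF subspaces(2)] by blast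
    ultimately have "vec.span (L \<union> l) = ?T"
      using L T subspaces dims by (intro span_Un_eq_of_dim_add) auto
    then have "m \<subseteq> vec.span (P \<union> l)"
      using T(4) L vec.span_mono[of "L \<union> l" "P \<union> l"] by blast
    moreover have "L = P \<inter> ?T"
      using L \<open>vec.subspace L\<close> \<open>vec.dim L = 2\<close> dim_plane_inter_solid_le[OF m] subspaces T(1)
      by (intro vec.subspace_dim_equal) (auto intro: vec.subspace_inter)
    ultimately show "m \<subseteq> vec.span (P \<union> l) \<inter> W \<and> L = P \<inter> ?T"
      using m(2) by blast
  next
    assume H: "m \<subseteq> vec.span (P \<union> l) \<inter> W \<and> L = P \<inter> ?T"
    have "?T \<subseteq> vec.span (P \<union> l)"
      using H vec.span_superset[of "P \<union> l"] by (intro vec.span_minimal) auto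
    then have "vec.span (P \<union> ?T) \<subseteq> vec.span (P \<union> l)"
      using vec.span_superset[of "P \<union> l"] by (intro vec.span_minimal) auto
    then have "vec.dim (vec.span (P \<union> ?T)) \<le> 5"
      using vec.dim_subset dim_join_plane_line by metis
    then have "2 \<le> vec.dim (P \<inter> ?T)"
      using dim_span_Un_Int[OF subspaces(1) T(1)] dims T(2) by linarith
    then have "pline L"
      using H dim_plane_inter_solid_le[OF m] subspaces T(1)
      by (auto simp: psub_def intro: vec.subspace_inter)
    moreover have "on_quadric L"
      using H \<open>on_quadric P\<close> unfolding on_quadric_def by blast
    ultimately show "L \<in> quadric_lines \<and> L \<subseteq> P \<and> L \<subseteq> ?T"
      using H unfolding quadric_lines_def by blast
  qed
qed

lemma spread_quadric_lines_in_plane_iff: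
  assumes "on_quadric P" and spread: "\<forall>m\<in>S. pline m \<and> m \<subseteq> W"
  shows "L \<in> (\<Union>m\<in>S. {L \<in> quadric_lines. L \<subseteq> vec.span (m \<union> l)}) \<and> L \<subseteq> P \<longleftrightarrow>
    (\<exists>m\<in>S. m \<subseteq> vec.span (P \<union> l) \<inter> W \<and> L = P \<inter> vec.span (m \<union> l))"
proof -
  have "L \<in> (\<Union>m\<in>S. {L \<in> quadric_lines. L \<subseteq> vec.span (m \<union> l)}) \<and> L \<subseteq> P \<longleftrightarrow>
      (\<exists>m\<in>S. L \<in> quadric_lines \<and> L \<subseteq> P \<and> L \<subseteq> vec.span (m \<union> l))"
    by blast
  also have "\<dots> \<longleftrightarrow> (\<exists>m\<in>S. m \<subseteq> vec.span (P \<union> l) \<inter> W \<and> L = P \<inter> vec.span (m \<union> l))"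
  proof (rule bex_cong[OF refl])
    fix m assume "m \<in> S"
    then show "L \<in> quadric_lines \<and> L \<subseteq> P \<and> L \<subseteq> vec.span (m \<union> l) \<longleftrightarrow>
        m \<subseteq> vec.span (P \<union> l) \<inter> W \<and> L = P \<inter> vec.span (m \<union> l)"
      using spread by (intro quadric_line_in_plane_and_solid_iff[OF \<open>on_quadric P\<close>]) auto
  qed
  finally show ?thesis .
qed

end

theorem theorem4p7:
  fixes l :: "('a::{field,finite}) vec6 set"
    and S :: "'a vec6 set set"
  assumes "pline l"
    and "disjoint_quadric l"
    and "line_spread S (perp l)"
  shows "ovoid32 (\<Union>m\<in>S. {L \<in> quadric_lines. L \<subseteq> vec.span (m \<union> l)})"
proof -
  have inter_l_perp: "l \<inter> perp l = {0}" and solid: "psolid (perp l)"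
    using anisotropic_line_perp[OF assms(1,2)] by auto
  have spread_lines: "\<forall>m\<in>S. pline m \<and> m \<subseteq> perp l"
    using assms(3) unfolding line_spread_def by auto
  have "\<exists>!L. L \<in> (\<Union>m\<in>S. {L \<in> quadric_lines. L \<subseteq> vec.span (m \<union> l)}) \<and> L \<subseteq> P"
    if "P \<in> generators" for P :: "'a vec6 set"
  proof -
    have P: "pplane P" "on_quadric P"
      using that by (simp_all add: generators_def)
    then have "P \<inter> l = {0}"
      using assms(1,2) by (intro on_quadric_inter_disjoint_quadric) (simp_all add: psub_def)
    note config = assms(1) solid inter_l_perp P(1) this
    have "\<exists>!m. m \<in> S \<and> m \<subseteq> vec.span (P \<union> l) \<inter> perp l"
      using line_spread_plane_unique_line[OF assms(3) solid pplane_join_inter[OF config]] by blast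
    then show ?thesis
      using spread_quadric_lines_in_plane_iff[OF config P(2) spread_lines] by auto
  qed
  then show ?thesis
    unfolding ovoid32_def by auto
qed

end
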